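(* Let $mG$ be a finite $|N|$-player canonical misinformation game on $|S|$ strategies. Then the Stable Set $\mathcal{AD}^\infty(\{mG\})$ is finite.
   Context: A normal-form game is $G=\langle N,S,P\rangle$ with finite players $N$, finite pure strategy sets $S_i$, positions $S=\times_i S_i$, payoffs $P_i:S\to\mathbb{R}$. A misinformation game $mG=\langle G^0,G^1,\dots,G^{|N|}\rangle$ consists of the actual game $G^0$ and subjective games $G^i$; it is canonical if all $G^i=\langle N,S,P^i\rangle$ differ from $G^0$ only in payoffs and in every $G^i$ all players have equally many pure strategies. $NME(mG)$ is the set of profiles $\sigma=(\sigma_1,\dots,\sigma_{|N|})$ such that each $\sigma_i$ is player $i$'s component of some Nash equilibrium of $G^i$. $\chi(\sigma)=\mathrm{supp}(\sigma_1)\times\dots\times\mathrm{supp}(\sigma_{|N|})$. For $\vec v\in S$, $mG_{\vec v}$ is obtained by replacing, in every $P^i$ ($i\ge1$), the payoff vector at position $\vec v$ by $P^0(\vec v)$. For a set $M$ of misinformation games, $\mathcal{AD}(M)=\{mG_{\vec u}: mG\in M,\sigma\in NME(mG),\vec u\in\chi(\sigma)\}$, $\mathcal{AD}^{(0)}(M)=M$, $\mathcal{AD}^{(t+1)}(M)=\mathcal{AD}^{(t)}(\mathcal{AD}(M))$. The length $\mathfrak{L}$ is the least $t\ge0$ with $\mathcal{AD}^{(t+1)}(M)=\mathcal{AD}^{(t)}(M)$, and the Stable Set is $\mathcal{AD}^\infty(M)=\mathcal{AD}^{(\mathfrak{L})}(M)$. *)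

theory Defs
  imports Complex_Main
begin

text \<open>Players form a finite type 'p, and (since in a
canonical game all players have equally many pure strategies and all subjective games
share N and S) every player's pure strategy set is the finite type 's. A position is a
pure profile 'p \<Rightarrow> 's.\<close>

type_synonym ('p, 's) payoff = "'p \<Rightarrow> ('p \<Rightarrow> 's) \<Rightarrow> real"

text \<open>A canonical misinformation game: the actual payoffs P^0 and, for each player i,
the payoffs P^i of the subjective game G^i.\<close>
type_synonym ('p, 's) mgame = "('p, 's) payoff \<times> ('p \<Rightarrow> ('p, 's) payoff)"

definition mixed_strategy :: "('s::finite \<Rightarrow> real) \<Rightarrow> bool" where
  "mixed_strategy x \<longleftrightarrow> (\<forall>s. x s \<ge> 0) \<and> (\<Sum>s\<in>UNIV. x s) = 1"

definition mixed_profile :: "('p \<Rightarrow> 's::finite \<Rightarrow> real) \<Rightarrow> bool" where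
  "mixed_profile \<sigma> \<longleftrightarrow> (\<forall>i. mixed_strategy (\<sigma> i))"

definition exp_payoff ::
  "('p::finite, 's::finite) payoff \<Rightarrow> 'p \<Rightarrow> ('p \<Rightarrow> 's \<Rightarrow> real) \<Rightarrow> real" where
  "exp_payoff P j \<sigma> = (\<Sum>v\<in>UNIV. (\<Prod>i\<in>UNIV. \<sigma> i (v i)) * P j v)"

definition nash_eq :: "('p::finite, 's::finite) payoff \<Rightarrow> ('p \<Rightarrow> 's \<Rightarrow> real) \<Rightarrow> bool" where
  "nash_eq P \<sigma> \<longleftrightarrow> mixed_profile \<sigma> \<and>
     (\<forall>j \<tau>. mixed_strategy \<tau> \<longrightarrow> exp_payoff P j (\<sigma>(j := \<tau>)) \<le> exp_payoff P j \<sigma>)"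

definition NME :: "('p::finite, 's::finite) mgame \<Rightarrow> ('p \<Rightarrow> 's \<Rightarrow> real) set" where
  "NME mG = {\<sigma>. \<forall>i. \<exists>\<sigma>'. nash_eq (snd mG i) \<sigma>' \<and> \<sigma>' i = \<sigma> i}"

definition supp :: "('s \<Rightarrow> real) \<Rightarrow> 's set" where
  "supp x = {s. x s \<noteq> 0}"

definition chi :: "('p \<Rightarrow> 's \<Rightarrow> real) \<Rightarrow> ('p \<Rightarrow> 's) set" where
  "chi \<sigma> = {v. \<forall>i. v i \<in> supp (\<sigma> i)}"

definition upd_game :: "('p, 's) mgame \<Rightarrow> ('p \<Rightarrow> 's) \<Rightarrow> ('p, 's) mgame" where
  "upd_game mG v = (fst mG, \<lambda>i j u. if u = v then fst mG j v else snd mG i j u)"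

definition AD :: "('p::finite, 's::finite) mgame set \<Rightarrow> ('p, 's) mgame set" where
  "AD M = {upd_game mG u | mG \<sigma> u. mG \<in> M \<and> \<sigma> \<in> NME mG \<and> u \<in> chi \<sigma>}"

definition AD_iter :: "nat \<Rightarrow> ('p::finite, 's::finite) mgame set \<Rightarrow> ('p, 's) mgame set" where
  "AD_iter t = AD ^^ t"

definition AD_length :: "('p::finite, 's::finite) mgame set \<Rightarrow> nat" where
  "AD_length M = (LEAST t. AD_iter (Suc t) M = AD_iter t M)"

definition stable_set :: "('p::finite, 's::finite) mgame set \<Rightarrow> ('p, 's) mgame set" where
  "stable_set M = AD_iter (AD_length M) M"

end

theory Submission
  imports Defs
begin

text \<open>Every game produced by iterating AD from M is a game of M in which the payoffs at
some set U of positions have been corrected to the actual ones, so all iterates lie in one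
finite set. A game of the t-th iterate that is not also in the next one arises from t updates
at positions that were not yet correct, hence t \<le> |S|. So from step |S| + 1 on each iterate
is contained in the next, and an increasing sequence inside a finite set becomes stationary.\<close>

lemma eventually_mono_chain_in_finite_set_stabilises:
  fixes X :: "nat \<Rightarrow> 'a set"
  assumes "finite R" and "\<And>t. X t \<subseteq> R" and "\<And>t. n \<le> t \<Longrightarrow> X t \<subseteq> X (Suc t)"
  shows "\<exists>t. X (Suc t) = X t"
proof (rule ccontr)
  assume "\<nexists>t. X (Suc t) = X t"
  with assms(3) have "strict_mono (\<lambda>k. X (n + k))"
    by (auto simp: strict_mono_Suc_iff psubset_eq)
  then have "inj (\<lambda>k. X (n + k))"
    by (rule strict_mono_imp_inj_on)
  moreover have "finite (range (\<lambda>k. X (n + k)))"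
    using assms(1,2) by (blast intro: finite_subset[of _ "Pow R"])
  ultimately show False
    using finite_imageD by blast
qed

lemma AD_iter_Suc: "AD_iter (Suc t) M = AD (AD_iter t M)"
  unfolding AD_iter_def by simp

lemma upd_game_in_AD: "g \<in> M \<Longrightarrow> \<sigma> \<in> NME g \<Longrightarrow> u \<in> chi \<sigma> \<Longrightarrow> upd_game g u \<in> AD M"
  unfolding AD_def by blast

lemma ADE:
  assumes "h \<in> AD M"
  obtains g \<sigma> u where "g \<in> M" "\<sigma> \<in> NME g" "u \<in> chi \<sigma>" "h = upd_game g u"
  using assms unfolding AD_def by blast

definition correct_positions :: "('p, 's) mgame \<Rightarrow> ('p \<Rightarrow> 's) set" where
  "correct_positions g = {v. \<forall>i j. snd g i j v = fst g j v}"

lemma upd_game_correct_position: "u \<in> correct_positions g \<Longrightarrow> upd_game g u = g"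
  unfolding correct_positions_def upd_game_def by (cases g) (auto intro!: ext)

lemma correct_positions_upd_game:
  "correct_positions (upd_game g u) = insert u (correct_positions g)"
  unfolding correct_positions_def upd_game_def by auto

lemma AD_iter_Suc_or_card_correct_positions:
  fixes M :: "('p::finite, 's::finite) mgame set"
  assumes "h \<in> AD_iter t M"
  shows "h \<in> AD_iter (Suc t) M \<or> t \<le> card (correct_positions h)"
  using assms
proof (induction t arbitrary: h)
  case 0
  then show ?case by simp
next
  case (Suc t)
  from Suc.prems obtain g \<sigma> u where g: "g \<in> AD_iter t M" "\<sigma> \<in> NME g" "u \<in> chi \<sigma>"
    and h: "h = upd_game g u"
    unfolding AD_iter_Suc by (rule ADE)
  show ?case
  proof (cases "g \<in> AD_iter (Suc t) M \<or> u \<in> correct_positions g")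
    case True
    then have "g \<in> AD_iter (Suc t) M"
      using Suc.prems h upd_game_correct_position by metis
    then show ?thesis
      using g(2,3) h by (simp add: AD_iter_Suc upd_game_in_AD)
  next
    case False
    then have "t \<le> card (correct_positions g)"
      using Suc.IH g(1) by blast
    with False show ?thesis
      by (simp add: h correct_positions_upd_game)
  qed
qed

lemma AD_iter_mono_after_card_positions:
  fixes M :: "('p::finite, 's::finite) mgame set"
  assumes "card (UNIV :: ('p \<Rightarrow> 's) set) < t"
  shows "AD_iter t M \<subseteq> AD_iter (Suc t) M"
proof
  fix h assume h: "h \<in> AD_iter t M"
  have "card (correct_positions h) \<le> card (UNIV :: ('p \<Rightarrow> 's) set)"
    by (rule card_mono) auto
  with assms have "\<not> t \<le> card (correct_positions h)"
    by linarith
  with AD_iter_Suc_or_card_correct_positions[OF h] show "h \<in> AD_iter (Suc t) M"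
    by blast
qed

definition corrected_game :: "('p, 's) mgame \<Rightarrow> ('p \<Rightarrow> 's) set \<Rightarrow> ('p, 's) mgame" where
  "corrected_game g U = (fst g, \<lambda>i j v. if v \<in> U then fst g j v else snd g i j v)"

lemma upd_game_corrected_game:
  "upd_game (corrected_game g U) u = corrected_game g (insert u U)"
  unfolding corrected_game_def upd_game_def by (auto intro!: ext)

lemma AD_iter_subset_corrected_games:
  fixes M :: "('p::finite, 's::finite) mgame set"
  shows "AD_iter t M \<subseteq> (\<Union>g\<in>M. range (corrected_game g))"
proof (induction t)
  case 0
  show ?case
  proof
    fix g assume "g \<in> AD_iter 0 M"
    then have "g \<in> M"
      by (simp add: AD_iter_def)
    moreover have "g \<in> range (corrected_game g)"
      by (rule range_eqI[of _ _ "{}"]) (simp add: corrected_game_def)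
    ultimately show "g \<in> (\<Union>g\<in>M. range (corrected_game g))"
      by blast
  qed
next
  case (Suc t)
  show ?case
  proof
    fix h assume "h \<in> AD_iter (Suc t) M"
    then obtain g \<sigma> u where "g \<in> AD_iter t M" "\<sigma> \<in> NME g" "u \<in> chi \<sigma>"
      and h: "h = upd_game g u"
      unfolding AD_iter_Suc by (rule ADE)
    with Suc.IH obtain g\<^sub>0 U where g\<^sub>0: "g\<^sub>0 \<in> M" and g: "g = corrected_game g\<^sub>0 U"
      by blast
    have "h = corrected_game g\<^sub>0 (insert u U)"
      unfolding h g by (rule upd_game_corrected_game)
    with g\<^sub>0 show "h \<in> (\<Union>g\<in>M. range (corrected_game g))"
      by blast
  qed
qed

theorem AD_iter_stabilises_finite:
  fixes M :: "('p::finite, 's::finite) mgame set"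
  assumes "finite M"
  shows "(\<exists>t. AD_iter (Suc t) M = AD_iter t M) \<and> finite (stable_set M)"
proof
  have finite_games: "finite (\<Union>g\<in>M. range (corrected_game g))"
    using assms by simp
  have "AD_iter t M \<subseteq> AD_iter (Suc t) M" if "Suc (card (UNIV :: ('p \<Rightarrow> 's) set)) \<le> t" for t
    using that by (simp add: AD_iter_mono_after_card_positions Suc_le_eq)
  with finite_games AD_iter_subset_corrected_games
  show "\<exists>t. AD_iter (Suc t) M = AD_iter t M"
    by (rule eventually_mono_chain_in_finite_set_stabilises)
  show "finite (stable_set M)"
    unfolding stable_set_def using finite_games AD_iter_subset_corrected_games
    by (rule finite_subset[rotated])
qed

theorem corollary1:
  fixes mG :: "('p::finite, 's::finite) mgame"
  shows "(\<exists>t. AD_iter (Suc t) {mG} = AD_iter t {mG}) \<and> finite (stable_set {mG})"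
  by (rule AD_iter_stabilises_finite) simp

end
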